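(* Let $\mathcal{G}=(G,\odot,\leq)$ be a real continuous Alo-group with $G$ an open interval of $\mathbb{R}$, and let $\tilde A=([a_{ij}^-,a_{ij}^+])$ be an $n\times n$ $[\mathcal{G}]$-reciprocal IPCM with associated matrices $L=(l_{ij})$, $R=(r_{ij})$. The following are equivalent: (1) $\tilde A$ is Liu's $[\mathcal{G}]$-consistent, i.e. $l_{ik}=l_{ij}\odot l_{jk}$ and $r_{ik}=r_{ij}\odot r_{jk}$ for all $i,j,k\in\{1,\dots,n\}$; (2) $l_{ik}=l_{ij}\odot l_{jk}$ and $r_{ik}=r_{ij}\odot r_{jk}$ for all $i<j<k$; (3) $\tilde a_{ik}=\tilde a_{ij}\odot_{[G]}\tilde a_{jk}$ for all $i<j<k$.
   Context: An Alo-group $(G,\odot,\leq)$ is an Abelian group with identity $e$ and a weak order $\leq$ such that $a\leq b\Rightarrow a\odot c\leq b\odot c$; real means $G\subseteq\mathbb{R}$ with usual order, continuous means $\odot$ is continuous. $[G]=\{[a^-,a^+]: a^-,a^+\in G,\ a^-\leq a^+\}$; $\tilde a^{(-1)}=[(a^+)^{(-1)},(a^-)^{(-1)}]$; $\tilde a\odot_{[G]}\tilde b=\{a\odot b: a\in\tilde a,b\in\tilde b\}$. An IPCM is an $n\times n$ matrix with entries in $[G]$; $[\mathcal{G}]$-reciprocal means $\tilde a_{ji}=\tilde a_{ij}^{(-1)}$ for all $i,j$. $L,R$ are defined by $l_{ij}=a_{ij}^-$ if $i<j$, $e$ if $i=j$, $a_{ij}^+$ if $i>j$; and $r_{ij}=a_{ij}^+$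 if $i<j$, $e$ if $i=j$, $a_{ij}^-$ if $i>j$. *)

theory Defs
  imports "HOL-Analysis.Analysis"
begin

definition alo_group :: "real set \<Rightarrow> (real \<Rightarrow> real \<Rightarrow> real) \<Rightarrow> real \<Rightarrow> bool" where
  "alo_group G op e \<longleftrightarrow>
     (\<forall>a\<in>G. \<forall>b\<in>G. op a b \<in> G) \<and>
     (\<forall>a\<in>G. \<forall>b\<in>G. \<forall>c\<in>G. op (op a b) c = op a (op b c)) \<and>
     (\<forall>a\<in>G. \<forall>b\<in>G. op a b = op b a) \<and>
     e \<in> G \<and> (\<forall>a\<in>G. op a e = a) \<and>
     (\<forall>a\<in>G. \<exists>b\<in>G. op a b = e) \<and>
     (\<forall>a\<in>G. \<forall>b\<in>G. \<forall>c\<in>G. a \<le> b \<longrightarrow> op a c \<le> op b c)"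

definition cont_alo_open_interval :: "real set \<Rightarrow> (real \<Rightarrow> real \<Rightarrow> real) \<Rightarrow> real \<Rightarrow> bool" where
  "cont_alo_open_interval G op e \<longleftrightarrow>
     alo_group G op e \<and> is_interval G \<and> open G \<and> G \<noteq> {} \<and>
     continuous_on (G \<times> G) (\<lambda>(x, y). op x y)"

definition ginv :: "real set \<Rightarrow> (real \<Rightarrow> real \<Rightarrow> real) \<Rightarrow> real \<Rightarrow> real \<Rightarrow> real" where
  "ginv G op e a = (THE b. b \<in> G \<and> op a b = e)"

text \<open>An interval [a^-, a^+] in [G] is represented by the pair (a^-, a^+).\<close>
definition in_IG :: "real set \<Rightarrow> real \<times> real \<Rightarrow> bool" where
  "in_IG G p \<longleftrightarrow> fst p \<in> G \<and> snd p \<in> G \<and> fst p \<le> snd p"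

definition ginv_I :: "real set \<Rightarrow> (real \<Rightarrow> real \<Rightarrow> real) \<Rightarrow> real \<Rightarrow> real \<times> real \<Rightarrow> real \<times> real" where
  "ginv_I G op e p = (ginv G op e (snd p), ginv G op e (fst p))"

definition op_I :: "(real \<Rightarrow> real \<Rightarrow> real) \<Rightarrow> real \<times> real \<Rightarrow> real \<times> real \<Rightarrow> real set" where
  "op_I op p q = {op a b | a b. a \<in> {fst p..snd p} \<and> b \<in> {fst q..snd q}}"

definition IPCM :: "real set \<Rightarrow> nat \<Rightarrow> (nat \<Rightarrow> nat \<Rightarrow> real \<times> real) \<Rightarrow> bool" where
  "IPCM G n A \<longleftrightarrow> (\<forall>i\<in>{1..n}. \<forall>j\<in>{1..n}. in_IG G (A i j))"

definition G_reciprocal :: "real set \<Rightarrow> (real \<Rightarrow> real \<Rightarrow> real) \<Rightarrow> real \<Rightarrow> nat \<Rightarrow> (nat \<Rightarrow> nat \<Rightarrow> real \<times> real) \<Rightarrow> bool" where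
  "G_reciprocal G op e n A \<longleftrightarrow>
     (\<forall>i\<in>{1..n}. \<forall>j\<in>{1..n}. A j i = ginv_I G op e (A i j))"

definition Lmat :: "real \<Rightarrow> (nat \<Rightarrow> nat \<Rightarrow> real \<times> real) \<Rightarrow> nat \<Rightarrow> nat \<Rightarrow> real" where
  "Lmat e A i j = (if i < j then fst (A i j) else if i = j then e else snd (A i j))"

definition Rmat :: "real \<Rightarrow> (nat \<Rightarrow> nat \<Rightarrow> real \<times> real) \<Rightarrow> nat \<Rightarrow> nat \<Rightarrow> real" where
  "Rmat e A i j = (if i < j then snd (A i j) else if i = j then e else fst (A i j))"

definition liu_consistent :: "(real \<Rightarrow> real \<Rightarrow> real) \<Rightarrow> real \<Rightarrow> nat \<Rightarrow> (nat \<Rightarrow> nat \<Rightarrow> real \<times> real) \<Rightarrow> bool" where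
  "liu_consistent op e n A \<longleftrightarrow>
     (\<forall>i\<in>{1..n}. \<forall>j\<in>{1..n}. \<forall>k\<in>{1..n}.
        Lmat e A i k = op (Lmat e A i j) (Lmat e A j k) \<and>
        Rmat e A i k = op (Rmat e A i j) (Rmat e A j k))"

end

theory Submission
  imports Defs
begin

text \<open>Both consistency conditions are about cocycles: a matrix f with f i i = e and
  f j i = (f i j)^(-1) that satisfies f i k = f i j \<odot> f j k for one ordering of i, j, k
  satisfies it for every ordering, because the identity is preserved under swapping
  i with j and j with k. Applied to L and R this gives (1) \<longleftrightarrow> (2). For (2) \<longleftrightarrow> (3),
  continuity and monotonicity of \<odot> on the interval G make the product of two intervals
  the interval between the products of their endpoints, and two nonempty closed
  intervals coincide iff their endpoints do.\<close>

definition consistent_triple :: "(real \<Rightarrow> real \<Rightarrow> real) \<Rightarrow> ('i \<Rightarrow> 'i \<Rightarrow> real) \<Rightarrow> 'i \<Rightarrow> 'i \<Rightarrow> 'i \<Rightarrow> bool" where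
  "consistent_triple op f i j k \<longleftrightarrow> f i k = op (f i j) (f j k)"

context
  fixes G :: "real set" and op :: "real \<Rightarrow> real \<Rightarrow> real" and e :: real
  assumes alo: "alo_group G op e"
begin

lemma alo_assoc: "a \<in> G \<Longrightarrow> b \<in> G \<Longrightarrow> c \<in> G \<Longrightarrow> op (op a b) c = op a (op b c)"
  using alo unfolding alo_group_def by blast

lemma alo_commute: "a \<in> G \<Longrightarrow> b \<in> G \<Longrightarrow> op a b = op b a"
  using alo unfolding alo_group_def by blast

lemma alo_unit_mem: "e \<in> G"
  using alo unfolding alo_group_def by blast

lemma alo_right_unit: "a \<in> G \<Longrightarrow> op a e = a"
  using alo unfolding alo_group_def by blast

lemma alo_left_unit: "a \<in> G \<Longrightarrow> op e a = a"
  using alo_right_unit alo_commute alo_unit_mem by metis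

lemma alo_mono_left: "a \<in> G \<Longrightarrow> b \<in> G \<Longrightarrow> c \<in> G \<Longrightarrow> a \<le> b \<Longrightarrow> op a c \<le> op b c"
  using alo unfolding alo_group_def by blast

lemma alo_mono_right: "a \<in> G \<Longrightarrow> b \<in> G \<Longrightarrow> c \<in> G \<Longrightarrow> a \<le> b \<Longrightarrow> op c a \<le> op c b"
  using alo_mono_left alo_commute by metis

lemma alo_mono: "a \<le> a' \<Longrightarrow> b \<le> b' \<Longrightarrow> a \<in> G \<Longrightarrow> a' \<in> G \<Longrightarrow> b \<in> G \<Longrightarrow> b' \<in> G \<Longrightarrow>
    op a b \<le> op a' b'"
  using alo_mono_left[of a a' b] alo_mono_right[of b b' a'] by linarith

lemma inverse_unique:
  assumes "a \<in> G" "b \<in> G" "b' \<in> G" "op a b = e" "op a b' = e"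
  shows "b' = b"
proof -
  have "b' = op (op b a) b'"
    using assms alo_commute alo_left_unit by simp
  also have "\<dots> = b"
    using assms alo_assoc alo_right_unit by simp
  finally show ?thesis .
qed

lemma ginv_unique: "a \<in> G \<Longrightarrow> b \<in> G \<Longrightarrow> op a b = e \<Longrightarrow> ginv G op e a = b"
  unfolding ginv_def by (rule the_equality) (use inverse_unique in blast)+

lemma ginv_mem_right_inverse:
  assumes "a \<in> G"
  shows "ginv G op e a \<in> G" and "op a (ginv G op e a) = e"
proof -
  obtain b where "b \<in> G" "op a b = e"
    using alo assms unfolding alo_group_def by blast
  with ginv_unique assms show "ginv G op e a \<in> G" "op a (ginv G op e a) = e"
    by simp_all
qed

lemma ginv_unit: "ginv G op e e = e"
  using ginv_unique alo_unit_mem alo_right_unit by simp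

lemma ginv_ginv: "a \<in> G \<Longrightarrow> ginv G op e (ginv G op e a) = a"
  using ginv_unique ginv_mem_right_inverse alo_commute by metis

context
  fixes S :: "'i::linorder set" and f :: "'i \<Rightarrow> 'i \<Rightarrow> real"
  assumes f_mem: "\<And>i j. i \<in> S \<Longrightarrow> j \<in> S \<Longrightarrow> f i j \<in> G"
    and f_diag: "\<And>i. i \<in> S \<Longrightarrow> f i i = e"
    and f_reciprocal: "\<And>i j. i \<in> S \<Longrightarrow> j \<in> S \<Longrightarrow> f j i = ginv G op e (f i j)"
begin

lemma reciprocal_right_inverse: "i \<in> S \<Longrightarrow> j \<in> S \<Longrightarrow> op (f i j) (f j i) = e"
  using ginv_mem_right_inverse(2)[OF f_mem] f_reciprocal by metis

lemma reciprocal_left_inverse: "i \<in> S \<Longrightarrow> j \<in> S \<Longrightarrow> op (f j i) (f i j) = e"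
  using reciprocal_right_inverse f_mem alo_commute by metis

lemma consistent_triple_swap12:
  assumes S: "i \<in> S" "j \<in> S" "k \<in> S" and ijk: "consistent_triple op f i j k"
  shows "consistent_triple op f j i k"
proof -
  have "op (f j i) (f i k) = op (op (f j i) (f i j)) (f j k)"
    using ijk S f_mem alo_assoc unfolding consistent_triple_def by simp
  also have "\<dots> = f j k"
    using S f_mem reciprocal_left_inverse alo_left_unit by simp
  finally show ?thesis
    unfolding consistent_triple_def by simp
qed

lemma consistent_triple_swap23:
  assumes S: "i \<in> S" "j \<in> S" "k \<in> S" and ijk: "consistent_triple op f i j k"
  shows "consistent_triple op f i k j"
proof -
  have "op (f i k) (f k j) = op (f i j) (op (f j k) (f k j))"
    using ijk S f_mem alo_assoc unfolding consistent_triple_def by simp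
  also have "\<dots> = f i j"
    using S f_mem reciprocal_right_inverse alo_right_unit by simp
  finally show ?thesis
    unfolding consistent_triple_def by simp
qed

lemma consistent_triple_degenerate:
  assumes "i \<in> S" "j \<in> S" "k \<in> S" "i = j \<or> j = k \<or> i = k"
  shows "consistent_triple op f i j k"
  using assms f_mem f_diag reciprocal_right_inverse alo_left_unit alo_right_unit
  unfolding consistent_triple_def by auto

lemma consistent_triple_if_increasing:
  assumes increasing: "\<And>i j k. i \<in> S \<Longrightarrow> j \<in> S \<Longrightarrow> k \<in> S \<Longrightarrow> i < j \<Longrightarrow> j < k \<Longrightarrow>
      consistent_triple op f i j k"
    and S: "i \<in> S" "j \<in> S" "k \<in> S"
  shows "consistent_triple op f i j k"
proof -
  note s12 = consistent_triple_swap12 and s23 = consistent_triple_swap23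
  consider "i = j \<or> j = k \<or> i = k" | "i < j" "j < k" | "i < k" "k < j" | "j < i" "i < k"
    | "j < k" "k < i" | "k < i" "i < j" | "k < j" "j < i"
    by (metis less_linear)
  then show ?thesis
  proof cases
    case 1
    then show ?thesis by (rule consistent_triple_degenerate[OF S])
  next
    case 2
    then show ?thesis by (rule increasing[OF S])
  next
    case 3
    then show ?thesis by (rule s23[OF S(1,3,2) increasing[OF S(1,3,2)]])
  next
    case 4
    then show ?thesis by (rule s12[OF S(2,1,3) increasing[OF S(2,1,3)]])
  next
    case 5
    then show ?thesis by (rule s12[OF S(2,1,3) s23[OF S(2,3,1) increasing[OF S(2,3,1)]]])
  next
    case 6
    then show ?thesis by (rule s23[OF S(1,3,2) s12[OF S(3,1,2) increasing[OF S(3,1,2)]]])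
  next
    case 7
    then show ?thesis
      by (rule s23[OF S(1,3,2) s12[OF S(3,1,2) s23[OF S(3,2,1) increasing[OF S(3,2,1)]]]])
  qed
qed

end

lemma Lmat_mem: "IPCM G n A \<Longrightarrow> i \<in> {1..n} \<Longrightarrow> j \<in> {1..n} \<Longrightarrow> Lmat e A i j \<in> G"
  using alo_unit_mem unfolding IPCM_def in_IG_def Lmat_def by auto

lemma Rmat_mem: "IPCM G n A \<Longrightarrow> i \<in> {1..n} \<Longrightarrow> j \<in> {1..n} \<Longrightarrow> Rmat e A i j \<in> G"
  using alo_unit_mem unfolding IPCM_def in_IG_def Rmat_def by auto

lemma reciprocal_entries:
  assumes "G_reciprocal G op e n A" "i \<in> {1..n}" "j \<in> {1..n}"
  shows "fst (A j i) = ginv G op e (snd (A i j))" and "snd (A j i) = ginv G op e (fst (A i j))"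
proof -
  have "A j i = ginv_I G op e (A i j)"
    using assms unfolding G_reciprocal_def by blast
  then show "fst (A j i) = ginv G op e (snd (A i j))" "snd (A j i) = ginv G op e (fst (A i j))"
    unfolding ginv_I_def by simp_all
qed

lemma Lmat_reciprocal:
  assumes A: "IPCM G n A" "G_reciprocal G op e n A" and ij: "i \<in> {1..n}" "j \<in> {1..n}"
  shows "Lmat e A j i = ginv G op e (Lmat e A i j)"
proof -
  consider "i < j" | "i = j" | "j < i"
    by fastforce
  then show ?thesis
  proof cases
    case 1
    then show ?thesis
      using reciprocal_entries(2)[OF A(2) ij] unfolding Lmat_def by simp
  next
    case 2
    then show ?thesis
      using ginv_unit unfolding Lmat_def by simp
  next
    case 3
    have "fst (A j i) \<in> G"
      using A(1) ij unfolding IPCM_def in_IG_def by blast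
    with 3 show ?thesis
      using reciprocal_entries(2)[OF A(2) ij(2,1)] ginv_ginv unfolding Lmat_def by simp
  qed
qed

lemma Rmat_reciprocal:
  assumes A: "IPCM G n A" "G_reciprocal G op e n A" and ij: "i \<in> {1..n}" "j \<in> {1..n}"
  shows "Rmat e A j i = ginv G op e (Rmat e A i j)"
proof -
  consider "i < j" | "i = j" | "j < i"
    by fastforce
  then show ?thesis
  proof cases
    case 1
    then show ?thesis
      using reciprocal_entries(1)[OF A(2) ij] unfolding Rmat_def by simp
  next
    case 2
    then show ?thesis
      using ginv_unit unfolding Rmat_def by simp
  next
    case 3
    have "snd (A j i) \<in> G"
      using A(1) ij unfolding IPCM_def in_IG_def by blast
    with 3 show ?thesis
      using reciprocal_entries(1)[OF A(2) ij(2,1)] ginv_ginv unfolding Rmat_def by simp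
  qed
qed

lemma liu_consistent_iff_increasing:
  assumes A: "IPCM G n A" "G_reciprocal G op e n A"
  shows "liu_consistent op e n A \<longleftrightarrow>
    (\<forall>i j k. 1 \<le> i \<and> i < j \<and> j < k \<and> k \<le> n \<longrightarrow>
       Lmat e A i k = op (Lmat e A i j) (Lmat e A j k) \<and>
       Rmat e A i k = op (Rmat e A i j) (Rmat e A j k))" (is "_ \<longleftrightarrow> ?increasing")
proof
  assume ?increasing
  then have L: "consistent_triple op (Lmat e A) i j k"
    and R: "consistent_triple op (Rmat e A) i j k"
    if "i \<in> {1..n}" "j \<in> {1..n}" "k \<in> {1..n}" "i < j" "j < k" for i j k
    using that unfolding consistent_triple_def by auto
  have "consistent_triple op (Lmat e A) i j k \<and> consistent_triple op (Rmat e A) i j k"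
    if "i \<in> {1..n}" "j \<in> {1..n}" "k \<in> {1..n}" for i j k
  proof
    show "consistent_triple op (Lmat e A) i j k"
      by (rule consistent_triple_if_increasing[OF Lmat_mem[OF A(1)] _ Lmat_reciprocal[OF A] L that])
        (simp_all add: Lmat_def)
    show "consistent_triple op (Rmat e A) i j k"
      by (rule consistent_triple_if_increasing[OF Rmat_mem[OF A(1)] _ Rmat_reciprocal[OF A] R that])
        (simp_all add: Rmat_def)
  qed
  then show "liu_consistent op e n A"
    unfolding liu_consistent_def consistent_triple_def by blast
qed (auto simp: liu_consistent_def)

lemma op_I_eq_Icc:
  assumes G: "is_interval G" "continuous_on (G \<times> G) (\<lambda>(x, y). op x y)"
    and pq: "in_IG G p" "in_IG G q"
  shows "op_I op p q = {op (fst p) (fst q) .. op (snd p) (snd q)}"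
proof
  have subset: "{fst p..snd p} \<subseteq> G" "{fst q..snd q} \<subseteq> G"
    using pq G(1) mem_is_interval_1_I unfolding in_IG_def by (meson atLeastAtMost_iff subsetI)+
  have image: "op_I op p q = (\<lambda>(x, y). op x y) ` ({fst p..snd p} \<times> {fst q..snd q})"
    unfolding op_I_def by force
  have "connected (op_I op p q)"
    unfolding image
    by (intro connected_continuous_image continuous_on_subset[OF G(2)] connected_Times)
      (use subset in auto)
  moreover have "op (fst p) (fst q) \<in> op_I op p q" "op (snd p) (snd q) \<in> op_I op p q"
    using pq unfolding op_I_def in_IG_def by auto
  ultimately show "{op (fst p) (fst q) .. op (snd p) (snd q)} \<subseteq> op_I op p q"
    by (rule connected_contains_Icc)
  show "op_I op p q \<subseteq> {op (fst p) (fst q) .. op (snd p) (snd q)}"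
  proof
    fix z
    assume "z \<in> op_I op p q"
    then obtain x y where z: "z = op x y" and xy: "x \<in> {fst p..snd p}" "y \<in> {fst q..snd q}"
      unfolding op_I_def by blast
    have "op (fst p) (fst q) \<le> op x y" "op x y \<le> op (snd p) (snd q)"
      using xy subset pq unfolding in_IG_def by (auto intro!: alo_mono)
    then show "z \<in> {op (fst p) (fst q) .. op (snd p) (snd q)}"
      using z by simp
  qed
qed

lemma Icc_eq_op_I_iff:
  assumes G: "is_interval G" "continuous_on (G \<times> G) (\<lambda>(x, y). op x y)"
    and pqr: "in_IG G p" "in_IG G q" "in_IG G r"
  shows "{fst r..snd r} = op_I op p q \<longleftrightarrow>
    fst r = op (fst p) (fst q) \<and> snd r = op (snd p) (snd q)"
proof -
  have "op (fst p) (fst q) \<le> op (snd p) (snd q)"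
    using pqr alo_mono unfolding in_IG_def by blast
  then show ?thesis
    using op_I_eq_Icc[OF G pqr(1,2)] Icc_eq_Icc pqr(3) unfolding in_IG_def by (metis not_le)
qed

end

theorem proposition10:
  fixes G :: "real set" and op :: "real \<Rightarrow> real \<Rightarrow> real" and e :: real
    and n :: nat and A :: "nat \<Rightarrow> nat \<Rightarrow> real \<times> real"
  assumes "cont_alo_open_interval G op e"
    and "IPCM G n A"
    and "G_reciprocal G op e n A"
  shows "(liu_consistent op e n A \<longleftrightarrow>
            (\<forall>i j k. 1 \<le> i \<and> i < j \<and> j < k \<and> k \<le> n \<longrightarrow>
               Lmat e A i k = op (Lmat e A i j) (Lmat e A j k) \<and>
               Rmat e A i k = op (Rmat e A i j) (Rmat e A j k)))
       \<and> (liu_consistent op e n A \<longleftrightarrow>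
            (\<forall>i j k. 1 \<le> i \<and> i < j \<and> j < k \<and> k \<le> n \<longrightarrow>
               {fst (A i k)..snd (A i k)} = op_I op (A i j) (A j k)))"
proof -
  from assms(1) have alo: "alo_group G op e" and G: "is_interval G"
    "continuous_on (G \<times> G) (\<lambda>(x, y). op x y)"
    unfolding cont_alo_open_interval_def by auto
  have entries: "in_IG G (A i j)" if "i \<in> {1..n}" "j \<in> {1..n}" for i j
    using assms(2) that unfolding IPCM_def by blast
  have "{fst (A i k)..snd (A i k)} = op_I op (A i j) (A j k) \<longleftrightarrow>
      Lmat e A i k = op (Lmat e A i j) (Lmat e A j k) \<and>
      Rmat e A i k = op (Rmat e A i j) (Rmat e A j k)"
    if "1 \<le> i" "i < j" "j < k" "k \<le> n" for i j k
    using Icc_eq_op_I_iff[OF alo G entries entries entries, of i j j k i k] that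
    by (simp add: Lmat_def Rmat_def)
  then show ?thesis
    using liu_consistent_iff_increasing[OF alo assms(2,3)] by auto
qed

end
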